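(* Let $\mathfrak h=\mathfrak{su}(p',q')$, $0<p'<q'$, with root data as in the context, let $\mathfrak h^0\subset\mathfrak h$ be an $\mathrm{ad}\,\mathfrak b_H$-invariant subalgebra, let $\mu\in\mathfrak a_H^*$, and let $s$ be a symmetric bilinear form on $\mathfrak h/\mathfrak h^0$ with $s(\mathrm{ad}A\,x,y)+s(x,\mathrm{ad}A\,y)=-2\mu(A)\,s(x,y)$ for all $A\in\mathfrak a_H$, $x,y\in\mathfrak h/\mathfrak h^0$. Suppose that for some $i'$, $\bar{\mathfrak h}_{-\alpha_{i'}}\ne0$. (1) If $p'>1$ and $\bar{\mathfrak h}_{-\alpha_{j'}}\ne0$ for some $j'\ne i'$, then $s$ has a totally isotropic subspace of dimension greater than $2p'-1$, unless $p'=2$, $\mu=\alpha_1+\alpha_2$, and $s$ has a totally isotropic subspace of dimension $3$. (2) If $p'>1$ and $\mathfrak h_{-\alpha_{j'}}\subset\mathfrak h^0$ for all $j'\ne i'$, then $s$ has a totally isotropic subspace of dimension at least $2p'-1$; and if the maximal totally isotropic subspaces of $s$ have dimension exactly $2p'-1$, then $2\mu=2\alpha_{i'}+\alpha'$ with $\alpha'\in\{0,\ \alpha_{j'},\ \alpha_{j'}+\alpha_{k'}: j',k'\ne i'\}$.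
   Context: Root data for $\mathfrak h=\mathfrak{su}(p',q')$: maximal $\mathbf R$-split $\mathfrak a_H$, restricted root system $BC_{p'}$ with short roots $\alpha_1,\dots,\alpha_{p'}$, positive roots $\{\alpha_{k'}\}\cup\{\alpha_{i'}-\alpha_{j'}:i'<j'\}\cup\{\alpha_{i'}+\alpha_{j'}\}$ (including $2\alpha_{i'}$); $\dim\mathfrak h_{\pm\alpha_{k'}}=2(q'-p')$, $\dim\mathfrak h_{\pm\alpha_{i'}\pm\alpha_{j'}}=2$ ($i'\ne j'$), $\dim\mathfrak h_{\pm2\alpha_{i'}}=1$; $\mathfrak b_H=\mathfrak a_H\oplus\bigoplus_{\alpha>0}\mathfrak h_\alpha$. For a subspace $\mathfrak l\subset\mathfrak h$, $\bar{\mathfrak l}$ denotes its image in $\mathfrak h/\mathfrak h^0$. A subspace $W$ is totally isotropic if $s(W,W)=0$. *)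

theory Defs
  imports "HOL-Analysis.Analysis"
begin

text \<open>Concrete model of su(p',q') with q' = p' + r, r >= 1.
 Index set of C^(p'+r+p'):  Inl i  (i in 'p),  Inr (Inl a) (a in 'r),  Inr (Inr i) (i in 'p).
 Hermitian form J of signature (q',p'): hyperbolic pairs (Inl i, Inr (Inr i)) and a positive
 definite block on the 'r indices.  su = { X | X^* J + J X = 0, tr X = 0 } (a real Lie algebra).\<close>

type_synonym ('p, 'r) idx = "'p + ('r + 'p)"
type_synonym ('p, 'r) mat = "complex ^ (('p, 'r) idx) ^ (('p, 'r) idx)"

definition Jform :: "('p::finite, 'r::finite) mat" where
  "Jform = (\<chi> u v. (case (u, v) of
      (Inl i, Inr (Inr j)) \<Rightarrow> (if i = j then 1 else 0)
    | (Inr (Inr i), Inl j) \<Rightarrow> (if i = j then 1 else 0)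
    | (Inr (Inl a), Inr (Inl b)) \<Rightarrow> (if a = b then 1 else 0)
    | _ \<Rightarrow> 0))"

definition ctrans :: "('p::finite, 'r::finite) mat \<Rightarrow> ('p, 'r) mat" where
  "ctrans X = (\<chi> u v. cnj (X $ v $ u))"

definition mtrace :: "('p::finite, 'r::finite) mat \<Rightarrow> complex" where
  "mtrace X = (\<Sum>u\<in>UNIV. X $ u $ u)"

definition su :: "('p::finite, 'r::finite) mat set" where
  "su = {X. ctrans X ** Jform + Jform ** X = 0 \<and> mtrace X = 0}"

definition lbr :: "('p::finite, 'r::finite) mat \<Rightarrow> ('p, 'r) mat \<Rightarrow> ('p, 'r) mat" where
  "lbr X Y = X ** Y - Y ** X"

text \<open>The maximal R-split abelian subalgebra a_H = { aH t | t }, with alpha_i (aH t) = t i.\<close>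
definition aH :: "('p::finite \<Rightarrow> real) \<Rightarrow> ('p, 'r::finite) mat" where
  "aH t = (\<chi> u v. if u = v then (case u of Inl i \<Rightarrow> complex_of_real (t i)
                                        | Inr (Inr i) \<Rightarrow> complex_of_real (- t i)
                                        | Inr (Inl _) \<Rightarrow> 0) else 0)"

text \<open>Elements of a_H^* are identified with 'p => real via lambda(aH t) = sum_i lambda i * t i;
 alpha_i is the i-th coordinate functional.\<close>
definition pair :: "('p::finite \<Rightarrow> real) \<Rightarrow> ('p \<Rightarrow> real) \<Rightarrow> real" where
  "pair l t = (\<Sum>i\<in>UNIV. l i * t i)"

definition alpha :: "'p \<Rightarrow> ('p \<Rightarrow> real)" where
  "alpha i = (\<lambda>j. if j = i then 1 else 0)"

definition rootspace :: "('p::finite \<Rightarrow> real) \<Rightarrow> ('p, 'r::finite) mat set" where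
  "rootspace l = {X \<in> su. \<forall>t. lbr (aH t) X = pair l t *\<^sub>R X}"

definition pos_roots :: "('p::{finite,linorder} \<Rightarrow> real) set" where
  "pos_roots = {alpha k | k. True} \<union> {(\<lambda>m. alpha i m - alpha j m) | i j. i < j}
              \<union> {(\<lambda>m. alpha i m + alpha j m) | i j. i < j} \<union> {(\<lambda>j. 2 * alpha i j) | i. True}"

definition bH :: "('p::{finite,linorder}, 'r::finite) mat set" where
  "bH = span (range aH \<union> (\<Union>l\<in>pos_roots. rootspace l))"

definition is_subalg :: "('p::finite, 'r::finite) mat set \<Rightarrow> bool" where
  "is_subalg S \<longleftrightarrow> subspace S \<and> S \<subseteq> su \<and> (\<forall>x\<in>S. \<forall>y\<in>S. lbr x y \<in> S)"

definition bH_invariant :: "('p::{finite,linorder}, 'r::finite) mat set \<Rightarrow> bool" where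
  "bH_invariant S \<longleftrightarrow> (\<forall>B\<in>bH. \<forall>x\<in>S. lbr B x \<in> S)"

text \<open>A symmetric bilinear form on su/h0, represented as a symmetric real-bilinear form on su
 having h0 in its radical.\<close>
definition quot_sym_form :: "('p::finite, 'r::finite) mat set \<Rightarrow> (('p, 'r) mat \<Rightarrow> ('p, 'r) mat \<Rightarrow> real) \<Rightarrow> bool" where
  "quot_sym_form h0 s \<longleftrightarrow>
     (\<forall>x\<in>su. \<forall>y\<in>su. s x y = s y x)
   \<and> (\<forall>x\<in>su. \<forall>y\<in>su. \<forall>z\<in>su. \<forall>a b::real. s (a *\<^sub>R x + b *\<^sub>R y) z = a * s x z + b * s y z)
   \<and> (\<forall>x\<in>h0. \<forall>y\<in>su. s x y = 0)"

text \<open>The quotient su/h0 has a totally isotropic subspace of dimension d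
 (lifted: subspaces W with h0 <= W <= su and dim W - dim h0 = d).\<close>
definition has_iso_dim :: "('p::finite, 'r::finite) mat set \<Rightarrow> (('p, 'r) mat \<Rightarrow> ('p, 'r) mat \<Rightarrow> real) \<Rightarrow> nat \<Rightarrow> bool" where
  "has_iso_dim h0 s d \<longleftrightarrow> (\<exists>W. subspace W \<and> h0 \<subseteq> W \<and> W \<subseteq> su
       \<and> (\<forall>x\<in>W. \<forall>y\<in>W. s x y = 0) \<and> dim W = dim h0 + d)"

end

(* The form s pairs the weight spaces of two weights l, l' of a_H only if l + l' = -2 mu, and h0,
   being a_H-stable, is the sum of its intersections with the weight spaces of su(p',q').  Hence
   pieces of root spaces of negative roots that meet h0 trivially, no two of whose roots add up to
   -2 mu, span together with h0 an isotropic subspace whose dimension modulo h0 is the sum of their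
   dimensions.  Because h0 is b_H-invariant and the image of h_{-alpha_i} is nonzero, h_{-2 alpha_i}
   and h_{-alpha_i-alpha_k} (and h_{-alpha_i+alpha_k} when h_{-alpha_k} lies in h0) meet h0 trivially:
   bracketing with suitable root vectors maps each of them onto h_{-alpha_i}.  A case distinction on
   mu then selects one of five such configurations, of dimensions 2p', 2p', 4p'-3, 2p'-1 and 4p'-5. *)

theory Submission
  imports Defs
begin

section \<open>Matrix calculus in the model of su(p',q')\<close>

definition Jpartner :: "('p::finite, 'r::finite) idx \<Rightarrow> ('p, 'r) idx" where
  "Jpartner u = (case u of Inl i \<Rightarrow> Inr (Inr i) | Inr (Inl a) \<Rightarrow> Inr (Inl a) | Inr (Inr i) \<Rightarrow> Inl i)"

lemma Jpartner_simps [simp]: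
  "Jpartner (Inl i) = Inr (Inr i)" "Jpartner (Inr (Inl a)) = Inr (Inl a)" "Jpartner (Inr (Inr i)) = Inl i"
  by (simp_all add: Jpartner_def)

lemma Jpartner_Jpartner [simp]: "Jpartner (Jpartner u) = u"
  by (auto simp: Jpartner_def split: sum.splits)

lemma idx_cases [case_names Inl_p Inl_r Inr_p]:
  fixes u :: "('p::finite, 'r::finite) idx"
  obtains (Inl_p) k where "u = Inl k" | (Inl_r) a where "u = Inr (Inl a)" | (Inr_p) k where "u = Inr (Inr k)"
  by (metis sum.exhaust)

lemma Jpartner_eq_iff: "v = Jpartner u \<longleftrightarrow> u = Jpartner v"
  by (metis Jpartner_Jpartner)

lemma Jform_entry: "Jform $ u $ v = (if v = Jpartner u then 1 else 0)"
  unfolding Jform_def Jpartner_def by (auto split: sum.splits)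

lemma Jform_mult_entry: "(Jform ** X) $ u $ v = X $ Jpartner u $ v"
proof -
  have "(Jform ** X) $ u $ v = (\<Sum>w\<in>UNIV. Jform $ u $ w * X $ w $ v)"
    by (simp add: matrix_matrix_mult_def)
  also have "\<dots> = (\<Sum>w\<in>UNIV. if w = Jpartner u then X $ w $ v else 0)"
    by (rule sum.cong) (auto simp: Jform_entry)
  finally show ?thesis by simp
qed

lemma ctrans_mult_Jform_entry: "(ctrans X ** Jform) $ u $ v = cnj (X $ Jpartner v $ u)"
proof -
  have "(ctrans X ** Jform) $ u $ v = (\<Sum>w\<in>UNIV. ctrans X $ u $ w * Jform $ w $ v)"
    by (simp add: matrix_matrix_mult_def)
  also have "\<dots> = (\<Sum>w\<in>UNIV. if w = Jpartner v then cnj (X $ w $ u) else 0)"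
    by (rule sum.cong) (auto simp: Jform_entry ctrans_def Jpartner_eq_iff)
  finally show ?thesis by simp
qed

lemma mem_su_iff:
  "X \<in> su \<longleftrightarrow> (\<forall>u v. X $ Jpartner u $ v + cnj (X $ Jpartner v $ u) = 0) \<and> mtrace X = 0"
  unfolding su_def by (simp add: vec_eq_iff ctrans_mult_Jform_entry Jform_mult_entry add.commute)

lemma sum_UNIV_idx:
  "(\<Sum>w\<in>(UNIV :: ('p::finite, 'r::finite) idx set). f w) =
     (\<Sum>k\<in>UNIV. f (Inl k)) + (\<Sum>a\<in>UNIV. f (Inr (Inl a))) + (\<Sum>k\<in>UNIV. f (Inr (Inr k)))"
  by (simp add: UNIV_Plus_UNIV[symmetric] sum.Plus add.assoc del: UNIV_Plus_UNIV)

lemma subspace_su: "subspace (su :: ('p::finite, 'r::finite) mat set)"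
proof (unfold subspace_def, intro conjI ballI allI)
  show "0 \<in> (su :: ('p, 'r) mat set)" by (simp add: mem_su_iff mtrace_def)
  show "X + Y \<in> su" if "X \<in> su" "Y \<in> su" for X Y :: "('p, 'r) mat"
    using that by (simp add: mem_su_iff mtrace_def sum.distrib algebra_simps)
  show "c *\<^sub>R X \<in> su" if "X \<in> su" for c and X :: "('p, 'r) mat"
    using that by (simp add: mem_su_iff mtrace_def flip: scaleR_add_right scaleR_sum_right)
qed

lemma mtrace_idx:
  "mtrace X = (\<Sum>k\<in>UNIV. X $ Inl k $ Inl k) + (\<Sum>a\<in>UNIV. X $ Inr (Inl a) $ Inr (Inl a))
     + (\<Sum>k\<in>UNIV. X $ Inr (Inr k) $ Inr (Inr k))"
  unfolding mtrace_def by (rule sum_UNIV_idx)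

definition aH_diag :: "('p::finite \<Rightarrow> real) \<Rightarrow> ('p, 'r::finite) idx \<Rightarrow> real" where
  "aH_diag t u = (case u of Inl k \<Rightarrow> t k | Inr (Inl a) \<Rightarrow> 0 | Inr (Inr k) \<Rightarrow> - t k)"

lemma aH_diag_simps [simp]:
  "aH_diag t (Inl k) = t k" "aH_diag t (Inr (Inl a)) = 0" "aH_diag t (Inr (Inr k)) = - t k"
  by (simp_all add: aH_diag_def)

lemma aH_entry: "aH t $ u $ v = (if u = v then of_real (aH_diag t u) else 0)"
  unfolding aH_def aH_diag_def by (auto split: sum.splits)

lemma aH_mult_entry: "(aH t ** X) $ u $ v = of_real (aH_diag t u) * X $ u $ v"
proof -
  have "(aH t ** X) $ u $ v = (\<Sum>w\<in>UNIV. aH t $ u $ w * X $ w $ v)"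
    by (simp add: matrix_matrix_mult_def)
  also have "\<dots> = (\<Sum>w\<in>UNIV. if w = u then of_real (aH_diag t u) * X $ w $ v else 0)"
    by (rule sum.cong) (auto simp: aH_entry)
  finally show ?thesis by simp
qed

lemma mult_aH_entry: "(X ** aH t) $ u $ v = X $ u $ v * of_real (aH_diag t v)"
proof -
  have "(X ** aH t) $ u $ v = (\<Sum>w\<in>UNIV. X $ u $ w * aH t $ w $ v)"
    by (simp add: matrix_matrix_mult_def)
  also have "\<dots> = (\<Sum>w\<in>UNIV. if w = v then X $ u $ w * of_real (aH_diag t v) else 0)"
    by (rule sum.cong) (auto simp: aH_entry)
  finally show ?thesis by simp
qed

lemma lbr_aH_entry: "lbr (aH t) X $ u $ v = of_real (aH_diag t u - aH_diag t v) * X $ u $ v"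
  unfolding lbr_def by (simp add: aH_mult_entry mult_aH_entry algebra_simps)

lemma scaleR_mat_entry: "(c *\<^sub>R X) $ u $ v = of_real c * X $ u $ v"
  unfolding vector_scaleR_component by (simp add: scaleR_conv_of_real)

lemma lbr_aH_add: "lbr (aH t) (X + Y) = lbr (aH t) X + lbr (aH t) Y"
  by (simp add: vec_eq_iff lbr_aH_entry distrib_left)

lemma lbr_aH_scaleR: "lbr (aH t) (c *\<^sub>R X) = c *\<^sub>R lbr (aH t) X"
  by (simp add: vec_eq_iff lbr_aH_entry scaleR_mat_entry)

lemma lbr_aH_sum: "lbr (aH t) (\<Sum>l\<in>L. y l) = (\<Sum>l\<in>L. lbr (aH t) (y l))"
  by (simp add: vec_eq_iff lbr_aH_entry sum_distrib_left)

lemma lbr_aH_eq_scaleR_iff: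
  "lbr (aH t) X = c *\<^sub>R X \<longleftrightarrow> (\<forall>u v. X $ u $ v = 0 \<or> aH_diag t u - aH_diag t v = c)"
  by (simp only: vec_eq_iff lbr_aH_entry scaleR_mat_entry mult_cancel_right of_real_eq_iff)

lemma mem_rootspace_iff:
  "X \<in> rootspace l \<longleftrightarrow> X \<in> su \<and> (\<forall>t u v. X $ u $ v = 0 \<or> aH_diag t u - aH_diag t v = pair l t)"
  unfolding rootspace_def lbr_aH_eq_scaleR_iff by blast

lemma lbr_aH_zero: "lbr (aH t) 0 = 0"
  by (simp add: lbr_def)

lemma subspace_rootspace: "subspace (rootspace l :: ('p::finite, 'r::finite) mat set)"
proof -
  have "subspace {X :: ('p, 'r) mat. \<forall>t. lbr (aH t) X = pair l t *\<^sub>R X}"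
    by (auto simp: subspace_def lbr_aH_zero lbr_aH_add lbr_aH_scaleR scaleR_add_right)
  then show ?thesis
    unfolding rootspace_def using subspace_su by (metis (no_types) Collect_conj_eq Collect_mem_eq subspace_inter)
qed

lemma pair_alpha [simp]: "pair (alpha k) t = t k"
proof -
  have "pair (alpha k) t = (\<Sum>i\<in>UNIV. if i = k then t i else 0)"
    unfolding pair_def alpha_def by (rule sum.cong) auto
  then show ?thesis by simp
qed

lemma pair_indicator [simp]: "pair l (\<lambda>x. if x = m then 1 else 0) = l m"
proof -
  have "pair l (\<lambda>x. if x = m then 1 else 0) = (\<Sum>i\<in>UNIV. if i = m then l i else 0)"
    unfolding pair_def by (rule sum.cong) auto
  then show ?thesis by simp
qed

lemma pair_add: "pair (\<lambda>m. l m + l' m) t = pair l t + pair l' t"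
  by (simp add: pair_def algebra_simps sum.distrib)

lemma pair_diff: "pair (\<lambda>m. l m - l' m) t = pair l t - pair l' t"
  by (simp add: pair_def algebra_simps sum_subtractf)

lemma pair_uminus: "pair (\<lambda>m. - l m) t = - pair l t"
  by (simp add: pair_def sum_negf)

lemma pair_scale: "pair (\<lambda>m. c * l m) t = c * pair l t"
  by (simp add: pair_def sum_distrib_left mult.assoc)

lemmas pair_linear = pair_add pair_diff pair_uminus pair_scale

definition pos_short_vec :: "'p \<Rightarrow> ('r \<Rightarrow> complex) \<Rightarrow> ('p::finite, 'r::finite) mat" where
  "pos_short_vec k x = (\<chi> u v. case (u, v) of
       (Inl k', Inr (Inl a)) \<Rightarrow> if k' = k then x a else 0
     | (Inr (Inl a), Inr (Inr k')) \<Rightarrow> if k' = k then - cnj (x a) else 0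
     | _ \<Rightarrow> 0)"

definition neg_short_vec :: "'p \<Rightarrow> ('r \<Rightarrow> complex) \<Rightarrow> ('p::finite, 'r::finite) mat" where
  "neg_short_vec i z = (\<chi> u v. case (u, v) of
       (Inr (Inl a), Inl i') \<Rightarrow> if i' = i then z a else 0
     | (Inr (Inr i'), Inr (Inl a)) \<Rightarrow> if i' = i then - cnj (z a) else 0
     | _ \<Rightarrow> 0)"

definition neg_long_vec :: "'p \<Rightarrow> real \<Rightarrow> ('p::finite, 'r::finite) mat" where
  "neg_long_vec i r = (\<chi> u v. case (u, v) of
       (Inr (Inr i'), Inl i'') \<Rightarrow> if i' = i \<and> i'' = i then \<i> * of_real r else 0
     | _ \<Rightarrow> 0)"

definition neg_sum_vec :: "'p \<Rightarrow> 'p \<Rightarrow> complex \<Rightarrow> ('p::finite, 'r::finite) mat" where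
  "neg_sum_vec i k w = (\<chi> u v. case (u, v) of
       (Inr (Inr i'), Inl k') \<Rightarrow>
         if i' = i \<and> k' = k then w else if i' = k \<and> k' = i then - cnj w else 0
     | _ \<Rightarrow> 0)"

definition neg_diff_vec :: "'p \<Rightarrow> 'p \<Rightarrow> complex \<Rightarrow> ('p::finite, 'r::finite) mat" where
  "neg_diff_vec i k w = (\<chi> u v. case (u, v) of
       (Inl k', Inl i') \<Rightarrow> if k' = k \<and> i' = i then w else 0
     | (Inr (Inr i'), Inr (Inr k')) \<Rightarrow> if k' = k \<and> i' = i then - cnj w else 0
     | _ \<Rightarrow> 0)"

lemma pos_short_vec_rootspace: "pos_short_vec k x \<in> rootspace (alpha k)"
  unfolding mem_rootspace_iff mem_su_iff mtrace_idx
  by (auto simp: pos_short_vec_def Jpartner_def pair_linear split: sum.splits)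

lemma neg_short_vec_rootspace: "neg_short_vec i z \<in> rootspace (\<lambda>m. - alpha i m)"
  unfolding mem_rootspace_iff mem_su_iff mtrace_idx
  by (auto simp: neg_short_vec_def Jpartner_def pair_linear split: sum.splits)

lemma neg_long_vec_rootspace: "neg_long_vec i r \<in> rootspace (\<lambda>m. - 2 * alpha i m)"
  unfolding mem_rootspace_iff mem_su_iff mtrace_idx
  by (auto simp: neg_long_vec_def Jpartner_def pair_linear split: sum.splits)

lemma neg_sum_vec_rootspace:
  "k \<noteq> i \<Longrightarrow> neg_sum_vec i k w \<in> rootspace (\<lambda>m. - alpha i m - alpha k m)"
  unfolding mem_rootspace_iff mem_su_iff mtrace_idx
  by (auto simp: neg_sum_vec_def Jpartner_def pair_linear split: sum.splits)

lemma neg_diff_vec_rootspace: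
  "k \<noteq> i \<Longrightarrow> neg_diff_vec i k w \<in> rootspace (\<lambda>m. - alpha i m + alpha k m)"
  unfolding mem_rootspace_iff mem_su_iff mtrace_idx
  by (auto simp: neg_diff_vec_def Jpartner_def pair_linear split: sum.splits cong: conj_cong)

lemma rootspace_neg_short:
  "(rootspace (\<lambda>m. - alpha i m) :: ('p::finite, 'r::finite) mat set) = range (neg_short_vec i)"
proof (intro subset_antisym subsetI)
  fix X :: "('p, 'r) mat" assume X: "X \<in> rootspace (\<lambda>m. - alpha i m)"
  have weight: "X $ u $ v = 0 \<or> aH_diag t u - aH_diag t v = - t i" for t u v
    using X by (simp add: mem_rootspace_iff pair_linear)
  \<comment> \<open>testing with t = 1 and t = indicator of i already pins down the support\<close>
  have support: "X $ u $ v = 0"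
    if "\<not> ((\<exists>a. u = Inr (Inl a) \<and> v = Inl i) \<or> (\<exists>a. u = Inr (Inr i) \<and> v = Inr (Inl a)))" for u v
    using that weight[of u v "\<lambda>_. 1"] weight[of u v "\<lambda>x. if x = i then 1 else 0"]
    by (cases u rule: idx_cases; cases v rule: idx_cases) auto
  have "X $ Jpartner (Inl i) $ Inr (Inl a) + cnj (X $ Jpartner (Inr (Inl a)) $ Inl i) = 0" for a
    using X by (simp only: mem_rootspace_iff mem_su_iff)
  then have "X = neg_short_vec i (\<lambda>a. X $ Inr (Inl a) $ Inl i)"
    using support by (auto simp: vec_eq_iff neg_short_vec_def add_eq_0_iff2 split: sum.splits)
  then show "X \<in> range (neg_short_vec i)" by blast
qed (use neg_short_vec_rootspace in blast)

lemma if_zero_mult_if_zero: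
  "(if P then x else 0) * (if Q then y else 0) = (if P \<and> Q then x * y else (0::'a::mult_zero))"
  by simp

lemma if_zero_mult: "(if P then x else 0) * y = (if P then x * y else (0::'a::mult_zero))"
  by simp

lemma mult_if_zero: "y * (if P then x else 0) = (if P then y * x else (0::'a::mult_zero))"
  by simp

lemma lbr_pos_short_neg_long:
  "lbr (pos_short_vec i x) (neg_long_vec i r) = neg_short_vec i (\<lambda>a. - (\<i> * of_real r) * cnj (x a))"
  unfolding lbr_def
  by (auto simp: vec_eq_iff matrix_matrix_mult_def sum_UNIV_idx pos_short_vec_def neg_long_vec_def
      neg_short_vec_def if_zero_mult_if_zero split: sum.splits)

lemma lbr_pos_short_neg_sum:
  "k \<noteq> i \<Longrightarrow> lbr (pos_short_vec k x) (neg_sum_vec i k w) = neg_short_vec i (\<lambda>a. cnj (x a * w))"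
  unfolding lbr_def
  by (auto simp: vec_eq_iff matrix_matrix_mult_def sum_UNIV_idx pos_short_vec_def neg_sum_vec_def
      neg_short_vec_def if_zero_mult mult_if_zero split: sum.splits cong: conj_cong)

lemma lbr_neg_short_neg_diff:
  "k \<noteq> i \<Longrightarrow> lbr (neg_short_vec k x) (neg_diff_vec i k w) = neg_short_vec i (\<lambda>a. x a * w)"
  unfolding lbr_def
  by (auto simp: vec_eq_iff matrix_matrix_mult_def sum_UNIV_idx neg_diff_vec_def
      neg_short_vec_def if_zero_mult_if_zero split: sum.splits)

lemma neg_long_vec_entry:
  "neg_long_vec i r $ u $ v = (if u = Inr (Inr i) \<and> v = Inl i then \<i> * of_real r else 0)"
  by (auto simp: neg_long_vec_def split: sum.split)

lemma neg_sum_vec_entry: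
  "neg_sum_vec i k w $ u $ v =
     (if u = Inr (Inr i) \<and> v = Inl k then w else if u = Inr (Inr k) \<and> v = Inl i then - cnj w else 0)"
  by (cases u rule: idx_cases; cases v rule: idx_cases) (simp_all add: neg_sum_vec_def)

lemma neg_diff_vec_entry:
  "neg_diff_vec i k w $ u $ v =
     (if u = Inl k \<and> v = Inl i then w else if u = Inr (Inr i) \<and> v = Inr (Inr k) then - cnj w else 0)"
  by (auto simp: neg_diff_vec_def split: sum.split)

lemma linear_hermitian_entries:
  fixes f :: "complex \<Rightarrow> ('p::finite, 'r::finite) mat"
  assumes "\<And>w u v. f w $ u $ v = (if P u v then w else if Q u v then - cnj w else 0)"
  shows "linear f"
  by (rule linearI) (simp_all add: vec_eq_iff assms scaleR_conv_of_real[where 'a=complex])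

lemma linear_neg_sum_vec: "linear (neg_sum_vec i k :: complex \<Rightarrow> ('p::finite, 'r::finite) mat)"
  by (rule linear_hermitian_entries) (rule neg_sum_vec_entry)

lemma linear_neg_diff_vec: "linear (neg_diff_vec i k :: complex \<Rightarrow> ('p::finite, 'r::finite) mat)"
  by (rule linear_hermitian_entries) (rule neg_diff_vec_entry)

lemma linear_neg_long_vec: "linear (neg_long_vec i :: real \<Rightarrow> ('p::finite, 'r::finite) mat)"
  by (rule linearI)
    (simp_all add: vec_eq_iff neg_long_vec_entry distrib_left scaleR_conv_of_real[where 'a=complex])

section \<open>Root vectors that an invariant subalgebra cannot contain\<close>

lemma aH_in_bH: "aH t \<in> bH"
  unfolding bH_def by (rule span_base) blast

lemma alpha_in_pos_roots: "alpha k \<in> pos_roots"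
  unfolding pos_roots_def by blast

lemma pos_short_vec_in_bH: "pos_short_vec k x \<in> bH"
  unfolding bH_def using alpha_in_pos_roots pos_short_vec_rootspace by (intro span_base) blast

lemma bH_invariantD: "bH_invariant h0 \<Longrightarrow> B \<in> bH \<Longrightarrow> x \<in> h0 \<Longrightarrow> lbr B x \<in> h0"
  unfolding bH_invariant_def by blast

lemma neg_short_rootspace_subset:
  assumes "\<And>z. neg_short_vec i z \<in> h0"
  shows "rootspace (\<lambda>m. - alpha i m) \<subseteq> h0"
  unfolding rootspace_neg_short using assms by blast

text \<open>In each of the next three lemmas, bracketing the given vector with a suitable root vector
  maps onto the whole root space of \<open>-\<alpha>\<^sub>i\<close>.\<close>

lemma neg_long_vec_mem_imp_zero:
  assumes "bH_invariant h0" "\<not> rootspace (\<lambda>m. - alpha i m) \<subseteq> h0" "neg_long_vec i r \<in> h0"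
  shows "r = 0"
proof (rule ccontr)
  assume r: "r \<noteq> 0"
  have "neg_short_vec i z \<in> h0" for z
  proof -
    have "(\<lambda>a. - (\<i> * of_real r) * cnj (cnj (z a / (- (\<i> * of_real r))))) = z"
      using r by simp
    then have "neg_short_vec i z = lbr (pos_short_vec i (\<lambda>a. cnj (z a / (- (\<i> * of_real r))))) (neg_long_vec i r)"
      by (simp add: lbr_pos_short_neg_long)
    then show ?thesis
      using bH_invariantD[OF assms(1) pos_short_vec_in_bH assms(3)] by simp
  qed
  then have "rootspace (\<lambda>m. - alpha i m) \<subseteq> h0"
    by (rule neg_short_rootspace_subset)
  with assms(2) show False ..
qed

lemma neg_sum_vec_mem_imp_zero:
  assumes "bH_invariant h0" "\<not> rootspace (\<lambda>m. - alpha i m) \<subseteq> h0" "k \<noteq> i" "neg_sum_vec i k w \<in> h0"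
  shows "w = 0"
proof (rule ccontr)
  assume w: "w \<noteq> 0"
  have "neg_short_vec i z \<in> h0" for z
  proof -
    have "(\<lambda>a. cnj (cnj (z a) / w * w)) = z"
      using w by simp
    then have "neg_short_vec i z = lbr (pos_short_vec k (\<lambda>a. cnj (z a) / w)) (neg_sum_vec i k w)"
      using assms(3) by (simp add: lbr_pos_short_neg_sum)
    then show ?thesis
      using bH_invariantD[OF assms(1) pos_short_vec_in_bH assms(4)] by simp
  qed
  then have "rootspace (\<lambda>m. - alpha i m) \<subseteq> h0"
    by (rule neg_short_rootspace_subset)
  with assms(2) show False ..
qed

lemma neg_diff_vec_mem_imp_zero:
  assumes "is_subalg h0" "\<not> rootspace (\<lambda>m. - alpha i m) \<subseteq> h0" "k \<noteq> i"
    and "rootspace (\<lambda>m. - alpha k m) \<subseteq> h0" "neg_diff_vec i k w \<in> h0"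
  shows "w = 0"
proof (rule ccontr)
  assume w: "w \<noteq> 0"
  have "neg_short_vec i z \<in> h0" for z
  proof -
    have "(\<lambda>a. z a / w * w) = z"
      using w by simp
    then have "neg_short_vec i z = lbr (neg_short_vec k (\<lambda>a. z a / w)) (neg_diff_vec i k w)"
      using assms(3) by (simp add: lbr_neg_short_neg_diff)
    moreover have "neg_short_vec k (\<lambda>a. z a / w) \<in> h0"
      using assms(4) neg_short_vec_rootspace by blast
    ultimately show ?thesis
      using assms(1,5) unfolding is_subalg_def by simp
  qed
  then have "rootspace (\<lambda>m. - alpha i m) \<subseteq> h0"
    by (rule neg_short_rootspace_subset)
  with assms(2) show False ..
qed

section \<open>Weight spaces and isotropic subspaces\<close>

lemma weight_components_mem:
  fixes V :: "('p::finite, 'r::finite) mat set"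
  assumes V: "subspace V" and V_aH: "\<And>t x. x \<in> V \<Longrightarrow> lbr (aH t) x \<in> V"
  shows "finite L \<Longrightarrow> (\<And>l. l \<in> L \<Longrightarrow> y l \<in> rootspace l) \<Longrightarrow> (\<Sum>l\<in>L. y l) \<in> V
    \<Longrightarrow> l \<in> L \<Longrightarrow> y l \<in> V"
proof (induction "card L" arbitrary: L y l rule: less_induct)
  case less
  show ?case
  proof (cases "L = {l}")
    case True
    then show ?thesis using less.prems(3) by simp
  next
    case False
    then obtain l' where l': "l' \<in> L" "l' \<noteq> l"
      using less.prems(4) by blast
    then obtain m where m: "l' m \<noteq> l m" by auto
    \<comment> \<open>\<open>ad (aH t) - l' t\<close> with \<open>t\<close> the indicator of \<open>m\<close> kills the \<open>l'\<close>-component and keeps the \<open>l\<close>-component\<close>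
    define t :: "'p \<Rightarrow> real" where "t = (\<lambda>x. if x = m then 1 else 0)"
    define y' where "y' = (\<lambda>k. (k m - l' m) *\<^sub>R y k)"
    have eig: "lbr (aH t) (y k) = k m *\<^sub>R y k" if "k \<in> L" for k
      using less.prems(2)[OF that] unfolding rootspace_def t_def by simp
    have "(\<Sum>k\<in>L - {l'}. y' k) = (\<Sum>k\<in>L. y' k)"
      using l' less.prems(1) by (intro sum.mono_neutral_left) (auto simp: y'_def)
    also have "\<dots> = lbr (aH t) (\<Sum>k\<in>L. y k) - l' m *\<^sub>R (\<Sum>k\<in>L. y k)"
      by (simp add: y'_def lbr_aH_sum eig scaleR_diff_left sum_subtractf scaleR_sum_right)
    also have "\<dots> \<in> V"
      using V V_aH less.prems(3) by (simp add: subspace_diff subspace_scale)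
    finally have sum_in: "(\<Sum>k\<in>L - {l'}. y' k) \<in> V" .
    have card_less: "card (L - {l'}) < card L"
      using l' less.prems(1) by (intro card_Diff1_less)
    have root: "y' k \<in> rootspace k" if "k \<in> L - {l'}" for k
      using subspace_scale[OF subspace_rootspace less.prems(2)] that unfolding y'_def by blast
    have "y' l \<in> V"
      using less.prems(1,4) l' by (intro less.hyps[OF card_less _ root sum_in]) auto
    then have "inverse (l m - l' m) *\<^sub>R y' l \<in> V"
      by (rule subspace_scale[OF V])
    then show ?thesis
      using m by (simp add: y'_def)
  qed
qed

lemma quot_sym_form_sym: "quot_sym_form h0 s \<Longrightarrow> x \<in> su \<Longrightarrow> y \<in> su \<Longrightarrow> s x y = s y x"
  unfolding quot_sym_form_def by blast

lemma quot_sym_form_radical: "quot_sym_form h0 s \<Longrightarrow> x \<in> h0 \<Longrightarrow> y \<in> su \<Longrightarrow> s x y = 0"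
  unfolding quot_sym_form_def by blast

lemma quot_sym_form_add_left:
  assumes "quot_sym_form h0 s" "x \<in> su" "y \<in> su" "z \<in> su"
  shows "s (x + y) z = s x z + s y z"
proof -
  have "s (1 *\<^sub>R x + 1 *\<^sub>R y) z = 1 * s x z + 1 * s y z"
    using assms unfolding quot_sym_form_def by blast
  then show ?thesis by simp
qed

lemma quot_sym_form_scaleR_left:
  assumes "quot_sym_form h0 s" "x \<in> su" "z \<in> su"
  shows "s (c *\<^sub>R x) z = c * s x z"
proof -
  have "s (c *\<^sub>R x + 0 *\<^sub>R x) z = c * s x z + 0 * s x z"
    using assms unfolding quot_sym_form_def by blast
  then show ?thesis by simp
qed

lemma quot_sym_form_scaleR_right:
  assumes "quot_sym_form h0 s" "x \<in> su" "z \<in> su"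
  shows "s z (c *\<^sub>R x) = c * s z x"
proof -
  have "c *\<^sub>R x \<in> su"
    using assms(2) by (rule subspace_scale[OF subspace_su])
  then have "s z (c *\<^sub>R x) = s (c *\<^sub>R x) z"
    by (rule quot_sym_form_sym[OF assms(1) assms(3)])
  also have "\<dots> = c * s z x"
    using assms by (simp add: quot_sym_form_scaleR_left quot_sym_form_sym)
  finally show ?thesis .
qed

lemma quot_sym_form_sum_left:
  assumes "quot_sym_form h0 s" "\<And>l. l \<in> L \<Longrightarrow> u l \<in> su" "z \<in> su"
  shows "s (\<Sum>l\<in>L. u l) z = (\<Sum>l\<in>L. s (u l) z)"
proof -
  have zero: "s 0 z = 0"
    using quot_sym_form_scaleR_left[OF assms(1) _ assms(3), of 0 0] subspace_0[OF subspace_su] by simp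
  show ?thesis
    using assms(2)
  proof (induction L rule: infinite_finite_induct)
    case (insert l L)
    have "(\<Sum>k\<in>L. u k) \<in> su"
      using insert.prems by (intro subspace_sum[OF subspace_su]) auto
    then show ?case
      using insert quot_sym_form_add_left[OF assms(1) _ _ assms(3)] by simp
  qed (simp_all add: zero)
qed

definition weighted_quot_form ::
    "('p::finite, 'r::finite) mat set \<Rightarrow> (('p, 'r) mat \<Rightarrow> ('p, 'r) mat \<Rightarrow> real) \<Rightarrow> ('p \<Rightarrow> real) \<Rightarrow> bool" where
  "weighted_quot_form h0 s mu \<longleftrightarrow> quot_sym_form h0 s \<and>
     (\<forall>t. \<forall>x\<in>su. \<forall>y\<in>su. s (lbr (aH t) x) y + s x (lbr (aH t) y) = - 2 * pair mu t * s x y)"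

lemma weight_spaces_orthogonal:
  assumes form: "weighted_quot_form h0 s mu"
    and x: "x \<in> rootspace l" and y: "y \<in> rootspace l'"
    and ne: "(\<lambda>m. l m + l' m) \<noteq> (\<lambda>m. - 2 * mu m)"
  shows "s x y = 0"
proof -
  obtain m where m: "l m + l' m \<noteq> - 2 * mu m"
    using ne by auto
  define t :: "'a \<Rightarrow> real" where "t = (\<lambda>x. if x = m then 1 else 0)"
  have sym: "quot_sym_form h0 s"
    using form unfolding weighted_quot_form_def by blast
  have xs: "x \<in> su" and ys: "y \<in> su"
    using x y by (auto simp: rootspace_def)
  have "lbr (aH t) x = l m *\<^sub>R x" "lbr (aH t) y = l' m *\<^sub>R y"
    using x y unfolding rootspace_def t_def by simp_all
  then have "s (lbr (aH t) x) y + s x (lbr (aH t) y) = (l m + l' m) * s x y"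
    using quot_sym_form_scaleR_left[OF sym] quot_sym_form_scaleR_right[OF sym] xs ys
    by (simp add: algebra_simps)
  moreover have "s (lbr (aH t) x) y + s x (lbr (aH t) y) = - 2 * mu m * s x y"
    using form xs ys unfolding weighted_quot_form_def t_def by simp
  ultimately have "(l m + l' m + 2 * mu m) * s x y = 0"
    by (simp add: algebra_simps)
  then show ?thesis
    using m by simp
qed

definition sum_subspaces :: "'a::real_vector set \<Rightarrow> ('k \<Rightarrow> 'a set) \<Rightarrow> 'k set \<Rightarrow> 'a set" where
  "sum_subspaces V U L = {v + (\<Sum>l\<in>L. u l) | v u. v \<in> V \<and> (\<forall>l\<in>L. u l \<in> U l)}"

lemma sum_subspaces_empty [simp]: "sum_subspaces V U {} = V"
  by (simp add: sum_subspaces_def)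

lemma sum_subspaces_insert:
  assumes "finite L" "l \<notin> L"
  shows "sum_subspaces V U (insert l L) = {a + b | a b. a \<in> sum_subspaces V U L \<and> b \<in> U l}"
proof (intro subset_antisym subsetI)
  fix x assume "x \<in> sum_subspaces V U (insert l L)"
  then obtain v u where x: "x = v + (\<Sum>k\<in>insert l L. u k)" "v \<in> V" "\<forall>k\<in>insert l L. u k \<in> U k"
    unfolding sum_subspaces_def by blast
  have "x = (v + (\<Sum>k\<in>L. u k)) + u l"
    using assms x(1) by (simp add: algebra_simps)
  moreover have "v + (\<Sum>k\<in>L. u k) \<in> sum_subspaces V U L"
    using x(2,3) unfolding sum_subspaces_def by blast
  ultimately show "x \<in> {a + b | a b. a \<in> sum_subspaces V U L \<and> b \<in> U l}"
    using x(3) by blast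
next
  fix x assume "x \<in> {a + b | a b. a \<in> sum_subspaces V U L \<and> b \<in> U l}"
  then obtain v u b where x: "x = v + (\<Sum>k\<in>L. u k) + b" "v \<in> V" "\<forall>k\<in>L. u k \<in> U k" "b \<in> U l"
    unfolding sum_subspaces_def by blast
  have "(\<Sum>k\<in>L. (u(l := b)) k) = (\<Sum>k\<in>L. u k)"
    using assms(2) by (intro sum.cong) auto
  then have "x = v + (\<Sum>k\<in>insert l L. (u(l := b)) k)"
    using assms x(1) by (simp add: algebra_simps)
  then show "x \<in> sum_subspaces V U (insert l L)"
    using x(2-4) unfolding sum_subspaces_def by force
qed

lemma subspace_sum_subspaces:
  assumes "subspace V" "finite L" "\<And>l. l \<in> L \<Longrightarrow> subspace (U l)"
  shows "subspace (sum_subspaces V U L)"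
  using assms(2,3)
  by (induction L rule: finite_induct) (simp_all add: assms(1) sum_subspaces_insert subspace_sums)

lemma subset_sum_subspaces: "(\<And>l. l \<in> L \<Longrightarrow> 0 \<in> U l) \<Longrightarrow> V \<subseteq> sum_subspaces V U L"
  unfolding sum_subspaces_def by (force intro: exI[of _ "\<lambda>_. 0"])

lemma sum_subspaces_subset:
  assumes "subspace S" "V \<subseteq> S" "\<And>l. l \<in> L \<Longrightarrow> U l \<subseteq> S"
  shows "sum_subspaces V U L \<subseteq> S"
proof
  fix x assume "x \<in> sum_subspaces V U L"
  then obtain v u where x: "x = v + (\<Sum>l\<in>L. u l)" "v \<in> V" "\<forall>l\<in>L. u l \<in> U l"
    unfolding sum_subspaces_def by blast
  have "(\<Sum>l\<in>L. u l) \<in> S"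
    using x(3) assms(3) by (intro subspace_sum[OF assms(1)]) blast
  then show "x \<in> S"
    using x(1,2) assms(1,2) subspace_add by blast
qed

lemma sum_subspaces_inter_weight_space:
  fixes h0 :: "('p::finite, 'r::finite) mat set"
  assumes h0: "subspace h0" and h0_aH: "\<And>t x. x \<in> h0 \<Longrightarrow> lbr (aH t) x \<in> h0"
    and L: "finite L" "l \<notin> L" and U: "\<And>k. k \<in> insert l L \<Longrightarrow> U k \<subseteq> rootspace k"
    and meet: "U l \<inter> h0 \<subseteq> {0}"
  shows "sum_subspaces h0 U L \<inter> U l \<subseteq> {0}"
proof
  fix x assume x: "x \<in> sum_subspaces h0 U L \<inter> U l"
  then obtain v u where xv: "x = v + (\<Sum>k\<in>L. u k)" "v \<in> h0" "\<forall>k\<in>L. u k \<in> U k"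
    unfolding sum_subspaces_def by blast
  \<comment> \<open>\<open>- v = (- x) + \<Sum>u\<close> is a sum of weight vectors of distinct weights lying in \<open>h0\<close>\<close>
  define y where "y = u(l := - x)"
  have "(\<Sum>k\<in>L. y k) = (\<Sum>k\<in>L. u k)"
    using L(2) unfolding y_def by (intro sum.cong) auto
  then have "(\<Sum>k\<in>insert l L. y k) = - v"
    using L xv(1) by (simp add: y_def)
  then have y_sum: "(\<Sum>k\<in>insert l L. y k) \<in> h0"
    using h0 xv(2) by (simp add: subspace_neg)
  have y_root: "y k \<in> rootspace k" if "k \<in> insert l L" for k
  proof (cases "k = l")
    case True
    then show ?thesis
      using x U subspace_neg[OF subspace_rootspace] unfolding y_def by auto
  next
    case False
    then show ?thesis
      using that xv(3) U unfolding y_def by auto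
  qed
  have "y l \<in> h0"
    by (rule weight_components_mem[OF h0 h0_aH]) (use L(1) y_root y_sum in auto)
  then have "- x \<in> h0"
    by (simp add: y_def)
  then have "x \<in> h0"
    using subspace_neg[OF h0] by fastforce
  then show "x \<in> {0}"
    using x meet by auto
qed

lemma dim_sum_subspaces:
  fixes h0 :: "('p::finite, 'r::finite) mat set"
  assumes h0: "subspace h0" and h0_aH: "\<And>t x. x \<in> h0 \<Longrightarrow> lbr (aH t) x \<in> h0"
  shows "finite L \<Longrightarrow> (\<And>l. l \<in> L \<Longrightarrow> subspace (U l)) \<Longrightarrow> (\<And>l. l \<in> L \<Longrightarrow> U l \<subseteq> rootspace l)
    \<Longrightarrow> (\<And>l. l \<in> L \<Longrightarrow> U l \<inter> h0 \<subseteq> {0})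
    \<Longrightarrow> dim (sum_subspaces h0 U L) = dim h0 + (\<Sum>l\<in>L. dim (U l))"
proof (induction L rule: finite_induct)
  case empty
  then show ?case by simp
next
  case (insert l L)
  let ?W = "sum_subspaces h0 U L"
  have W: "subspace ?W"
    using h0 insert by (intro subspace_sum_subspaces) auto
  have "?W \<inter> U l \<subseteq> {0}"
    using insert by (intro sum_subspaces_inter_weight_space[OF h0 h0_aH]) auto
  moreover have "0 \<in> ?W" "0 \<in> U l"
    using W insert.prems(1) by (simp_all add: subspace_0)
  ultimately have zero: "dim (?W \<inter> U l) = 0"
    by (simp add: subset_antisym)
  have "subspace (U l)"
    using insert.prems(1) by simp
  then have "dim {a + b | a b. a \<in> ?W \<and> b \<in> U l} + dim (?W \<inter> U l) = dim ?W + dim (U l)"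
    by (rule dim_sums_Int[OF W])
  then have "dim (sum_subspaces h0 U (insert l L)) = dim ?W + dim (U l)"
    unfolding sum_subspaces_insert[OF insert.hyps] using zero by linarith
  then show ?case
    using insert by (simp add: algebra_simps)
qed

lemma sum_subspaces_isotropic:
  assumes form: "quot_sym_form h0 s" and h0: "h0 \<subseteq> su" and U: "\<And>l. l \<in> L \<Longrightarrow> U l \<subseteq> su"
    and orth: "\<And>l l' x y. l \<in> L \<Longrightarrow> l' \<in> L \<Longrightarrow> x \<in> U l \<Longrightarrow> y \<in> U l' \<Longrightarrow> s x y = 0"
    and x: "x \<in> sum_subspaces h0 U L" and y: "y \<in> sum_subspaces h0 U L"
  shows "s x y = 0"
proof -
  obtain v u where xv: "x = v + (\<Sum>l\<in>L. u l)" "v \<in> h0" "\<forall>l\<in>L. u l \<in> U l"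
    using x unfolding sum_subspaces_def by blast
  obtain v' u' where yv: "y = v' + (\<Sum>l\<in>L. u' l)" "v' \<in> h0" "\<forall>l\<in>L. u' l \<in> U l"
    using y unfolding sum_subspaces_def by blast
  have u_su: "u l \<in> su" "u' l \<in> su" if "l \<in> L" for l
    using that xv(3) yv(3) U by blast+
  have sums_su: "(\<Sum>l\<in>L. u l) \<in> su" "(\<Sum>l\<in>L. u' l) \<in> su"
    using u_su by (auto intro: subspace_sum[OF subspace_su])
  have y_su: "y \<in> su"
    using yv(1,2) h0 sums_su(2) subspace_add[OF subspace_su] by blast
  have "s (u l) y = 0" if l: "l \<in> L" for l
  proof -
    have "s (u l) y = s y (u l)"
      using u_su(1)[OF l] y_su by (rule quot_sym_form_sym[OF form])
    also have "\<dots> = s v' (u l) + (\<Sum>k\<in>L. s (u' k) (u l))"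
      using yv(1,2) h0 sums_su(2) u_su l
      by (simp add: quot_sym_form_add_left[OF form] quot_sym_form_sum_left[OF form] subset_iff)
    also have "\<dots> = 0"
      using quot_sym_form_radical[OF form yv(2) u_su(1)[OF l]] orth yv(3) xv(3) l by simp
    finally show ?thesis .
  qed
  moreover have "s x y = s v y + (\<Sum>l\<in>L. s (u l) y)"
    using xv(1,2) h0 sums_su(1) u_su y_su
    by (simp add: quot_sym_form_add_left[OF form] quot_sym_form_sum_left[OF form] subset_iff)
  ultimately show ?thesis
    using quot_sym_form_radical[OF form xv(2) y_su] by simp
qed

definition isotropic_weights :: "('p \<Rightarrow> real) \<Rightarrow> ('p \<Rightarrow> real) set \<Rightarrow> bool" where
  "isotropic_weights mu L \<longleftrightarrow> (\<forall>l\<in>L. \<forall>l'\<in>L. (\<lambda>m. l m + l' m) \<noteq> (\<lambda>m. - 2 * mu m))"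

lemma has_iso_dim_weight_family:
  fixes h0 :: "('p::finite, 'r::finite) mat set"
  assumes h0: "subspace h0" "h0 \<subseteq> su" "\<And>t x. x \<in> h0 \<Longrightarrow> lbr (aH t) x \<in> h0"
    and form: "weighted_quot_form h0 s mu"
    and L: "finite L" and U: "\<And>l. l \<in> L \<Longrightarrow> subspace (U l)" "\<And>l. l \<in> L \<Longrightarrow> U l \<subseteq> rootspace l"
    "\<And>l. l \<in> L \<Longrightarrow> U l \<inter> h0 \<subseteq> {0}"
    and iso: "isotropic_weights mu L"
  shows "has_iso_dim h0 s (\<Sum>l\<in>L. dim (U l))"
  unfolding has_iso_dim_def
proof (intro exI conjI)
  let ?W = "sum_subspaces h0 U L"
  have U_su: "U l \<subseteq> su" if "l \<in> L" for l
    using U(2)[OF that] by (auto simp: rootspace_def)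
  show "subspace ?W"
    using h0(1) L U(1) by (rule subspace_sum_subspaces)
  show "h0 \<subseteq> ?W"
    using U(1) by (intro subset_sum_subspaces) (simp add: subspace_0)
  show "?W \<subseteq> su"
    using h0(2) U_su by (intro sum_subspaces_subset[OF subspace_su])
  show "\<forall>x\<in>?W. \<forall>y\<in>?W. s x y = 0"
  proof (intro ballI)
    fix x y assume x: "x \<in> ?W" and y: "y \<in> ?W"
    have orth: "s a b = 0" if "l \<in> L" "l' \<in> L" "a \<in> U l" "b \<in> U l'" for l l' a b
    proof (rule weight_spaces_orthogonal[OF form])
      show "a \<in> rootspace l" "b \<in> rootspace l'"
        using U(2) that by blast+
      show "(\<lambda>m. l m + l' m) \<noteq> (\<lambda>m. - 2 * mu m)"
        using iso that(1,2) unfolding isotropic_weights_def by blast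
    qed
    have "quot_sym_form h0 s"
      using form unfolding weighted_quot_form_def by blast
    then show "s x y = 0"
      by (rule sum_subspaces_isotropic[OF _ h0(2) U_su orth x y])
  qed
  show "dim ?W = dim h0 + (\<Sum>l\<in>L. dim (U l))"
    using h0(1,3) L U by (rule dim_sum_subspaces)
qed

section \<open>Blocks of negative root vectors\<close>

datatype 'p neg_root = NegShort 'p | NegLong 'p | NegSum 'p 'p | NegDiff 'p 'p

fun neg_root_weight :: "'p neg_root \<Rightarrow> 'p \<Rightarrow> real" where
  "neg_root_weight (NegShort i) = (\<lambda>m. - alpha i m)"
| "neg_root_weight (NegLong i) = (\<lambda>m. - 2 * alpha i m)"
| "neg_root_weight (NegSum i k) = (\<lambda>m. - alpha i m - alpha k m)"
| "neg_root_weight (NegDiff i k) = (\<lambda>m. - alpha i m + alpha k m)"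

fun neg_root_proper :: "'p neg_root \<Rightarrow> bool" where
  "neg_root_proper (NegSum i k) \<longleftrightarrow> k \<noteq> i"
| "neg_root_proper (NegDiff i k) \<longleftrightarrow> k \<noteq> i"
| "neg_root_proper _ \<longleftrightarrow> True"

text \<open>Stated with nested conditionals: the simplifier loops on sums of overlapping ones.\<close>

lemma neg_root_weight_apply:
  "neg_root_weight b m = (case b of
       NegShort i \<Rightarrow> if m = i then -1 else 0
     | NegLong i \<Rightarrow> if m = i then -2 else 0
     | NegSum i k \<Rightarrow> if m = i then (if m = k then -2 else -1) else if m = k then -1 else 0
     | NegDiff i k \<Rightarrow> if m = i then (if m = k then 0 else -1) else if m = k then 1 else 0)"
  by (cases b) (simp_all add: alpha_def)

lemma neg_root_weight_eq:
  assumes "neg_root_weight b = neg_root_weight b'" "neg_root_proper b" "neg_root_proper b'"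
  shows "b = b' \<or> (\<exists>i k. b = NegSum i k \<and> b' = NegSum k i)"
proof -
  have at: "neg_root_weight b m = neg_root_weight b' m" for m
    using assms(1) by simp
  let ?fst = "\<lambda>b. case b of NegShort i \<Rightarrow> i | NegLong i \<Rightarrow> i | NegSum i k \<Rightarrow> i | NegDiff i k \<Rightarrow> i"
  let ?snd = "\<lambda>b. case b of NegShort i \<Rightarrow> i | NegLong i \<Rightarrow> i | NegSum i k \<Rightarrow> k | NegDiff i k \<Rightarrow> k"
  show ?thesis
    using assms(2,3) at[of "?fst b"] at[of "?snd b"] at[of "?fst b'"] at[of "?snd b'"]
    unfolding neg_root_weight_apply
    by (cases b; cases b') (auto split: if_splits)
qed

lemma inj_on_neg_root_weight:
  assumes "\<And>b. b \<in> K \<Longrightarrow> neg_root_proper b" "\<And>i k. NegSum i k \<in> K \<Longrightarrow> NegSum k i \<notin> K"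
  shows "inj_on neg_root_weight K"
proof (rule inj_onI)
  fix b b' assume b: "b \<in> K" "b' \<in> K" "neg_root_weight b = neg_root_weight b'"
  then have "b = b' \<or> (\<exists>i k. b = NegSum i k \<and> b' = NegSum k i)"
    using assms(1) by (intro neg_root_weight_eq) auto
  then show "b = b'"
    using assms(2) b(1,2) by auto
qed

definition short_root_vec_outside :: "('p::finite, 'r::finite) mat set \<Rightarrow> 'p \<Rightarrow> ('p, 'r) mat" where
  "short_root_vec_outside h0 i = (SOME Z. Z \<in> rootspace (\<lambda>m. - alpha i m) \<and> Z \<notin> h0)"

text \<open>Of the root space of \<open>-\<alpha>\<^sub>i\<close> only a single direction outside \<open>h0\<close> is available.\<close>

fun neg_root_space :: "('p::finite, 'r::finite) mat set \<Rightarrow> 'p neg_root \<Rightarrow> ('p, 'r) mat set" where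
  "neg_root_space h0 (NegShort i) = range (\<lambda>c::real. c *\<^sub>R short_root_vec_outside h0 i)"
| "neg_root_space h0 (NegLong i) = range (neg_long_vec i)"
| "neg_root_space h0 (NegSum i k) = range (neg_sum_vec i k)"
| "neg_root_space h0 (NegDiff i k) = range (neg_diff_vec i k)"

fun neg_root_dim :: "'p neg_root \<Rightarrow> nat" where
  "neg_root_dim (NegShort i) = 1"
| "neg_root_dim (NegLong i) = 1"
| "neg_root_dim (NegSum i k) = 2"
| "neg_root_dim (NegDiff i k) = 2"

fun neg_root_admissible :: "('p::finite, 'r::finite) mat set \<Rightarrow> 'p neg_root \<Rightarrow> bool" where
  "neg_root_admissible h0 (NegShort i) \<longleftrightarrow> \<not> rootspace (\<lambda>m. - alpha i m) \<subseteq> h0"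
| "neg_root_admissible h0 (NegLong i) \<longleftrightarrow> \<not> rootspace (\<lambda>m. - alpha i m) \<subseteq> h0"
| "neg_root_admissible h0 (NegSum i k) \<longleftrightarrow> \<not> rootspace (\<lambda>m. - alpha i m) \<subseteq> h0"
| "neg_root_admissible h0 (NegDiff i k) \<longleftrightarrow>
     \<not> rootspace (\<lambda>m. - alpha i m) \<subseteq> h0 \<and> rootspace (\<lambda>m. - alpha k m) \<subseteq> h0"

lemma linear_range_meets_trivially:
  fixes f :: "'a::euclidean_space \<Rightarrow> 'b::euclidean_space"
  assumes f: "linear f" and meet: "\<And>z. f z \<in> V \<Longrightarrow> z = 0" and V: "0 \<in> V"
  shows "subspace (range f)" "range f \<inter> V \<subseteq> {0}" "dim (range f) = DIM('a)"
proof -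
  show "subspace (range f)"
    using linear_subspace_image[OF f subspace_UNIV] by simp
  show "range f \<inter> V \<subseteq> {0}"
    using meet linear_0[OF f] by blast
  have "inj f"
    using f meet V by (simp add: linear_injective_0)
  then show "dim (range f) = DIM('a)"
    using dim_image_eq[OF f, of UNIV] by simp
qed

lemma short_root_vec_outside:
  assumes "\<not> rootspace (\<lambda>m. - alpha i m) \<subseteq> h0"
  shows "short_root_vec_outside h0 i \<in> rootspace (\<lambda>m. - alpha i m)" "short_root_vec_outside h0 i \<notin> h0"
proof -
  have "\<exists>Z. Z \<in> rootspace (\<lambda>m. - alpha i m) \<and> Z \<notin> h0"
    using assms by blast
  then show "short_root_vec_outside h0 i \<in> rootspace (\<lambda>m. - alpha i m)" "short_root_vec_outside h0 i \<notin> h0"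
    unfolding short_root_vec_outside_def by (metis (mono_tags, lifting) someI_ex)+
qed

lemma scaleR_mem_imp_zero:
  assumes "subspace V" "x \<notin> V" "c *\<^sub>R x \<in> V"
  shows "c = 0"
proof (rule ccontr)
  assume "c \<noteq> 0"
  then have "x = inverse c *\<^sub>R (c *\<^sub>R x)"
    by simp
  then show False
    using assms subspace_scale by metis
qed

lemma neg_root_space_props:
  fixes h0 :: "('p::{finite,linorder}, 'r::finite) mat set"
  assumes subalg: "is_subalg h0" and inv: "bH_invariant h0"
    and b: "neg_root_proper b" "neg_root_admissible h0 b"
  shows "subspace (neg_root_space h0 b) \<and> neg_root_space h0 b \<subseteq> rootspace (neg_root_weight b)
    \<and> neg_root_space h0 b \<inter> h0 \<subseteq> {0} \<and> dim (neg_root_space h0 b) = neg_root_dim b"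
proof -
  have h0: "subspace h0"
    using subalg unfolding is_subalg_def by blast
  then have zero: "0 \<in> h0"
    by (rule subspace_0)
  show ?thesis
  proof (cases b)
    case (NegShort i)
    define Z where "Z = short_root_vec_outside h0 i"
    have "\<not> rootspace (\<lambda>m. - alpha i m) \<subseteq> h0"
      using b(2) NegShort by simp
    then have Z: "Z \<in> rootspace (\<lambda>m. - alpha i m)" "Z \<notin> h0"
      unfolding Z_def by (rule short_root_vec_outside)+
    note range = linear_range_meets_trivially[OF linear_scale_left scaleR_mem_imp_zero[OF h0 Z(2)] zero]
    have "range (\<lambda>c::real. c *\<^sub>R Z) \<subseteq> rootspace (\<lambda>m. - alpha i m)"
      using subspace_scale[OF subspace_rootspace Z(1)] by blast
    then show ?thesis
      using NegShort range by (simp add: Z_def)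
  next
    case (NegLong i)
    note range = linear_range_meets_trivially[OF linear_neg_long_vec _ zero]
    have "\<And>r. neg_long_vec i r \<in> h0 \<Longrightarrow> r = 0"
      using neg_long_vec_mem_imp_zero[OF inv] b(2) NegLong by auto
    then show ?thesis
      using NegLong range neg_long_vec_rootspace by auto
  next
    case (NegSum i k)
    note range = linear_range_meets_trivially[OF linear_neg_sum_vec _ zero]
    have "\<And>w. neg_sum_vec i k w \<in> h0 \<Longrightarrow> w = 0"
      using neg_sum_vec_mem_imp_zero[OF inv] b NegSum by auto
    then show ?thesis
      using NegSum range neg_sum_vec_rootspace b(1) by auto
  next
    case (NegDiff i k)
    note range = linear_range_meets_trivially[OF linear_neg_diff_vec _ zero]
    have "\<And>w. neg_diff_vec i k w \<in> h0 \<Longrightarrow> w = 0"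
      using neg_diff_vec_mem_imp_zero[OF subalg] b NegDiff by auto
    then show ?thesis
      using NegDiff range neg_diff_vec_rootspace b(1) by auto
  qed
qed

lemma has_iso_dim_neg_roots:
  fixes h0 :: "('p::{finite,linorder}, 'r::finite) mat set"
  assumes subalg: "is_subalg h0" and inv: "bH_invariant h0" and form: "weighted_quot_form h0 s mu"
    and K: "finite K" "\<And>b. b \<in> K \<Longrightarrow> neg_root_proper b \<and> neg_root_admissible h0 b"
    "\<And>i k. NegSum i k \<in> K \<Longrightarrow> NegSum k i \<notin> K"
    and iso: "isotropic_weights mu (neg_root_weight ` K)"
  shows "has_iso_dim h0 s (\<Sum>b\<in>K. neg_root_dim b)"
proof -
  have inj: "inj_on neg_root_weight K"
    by (rule inj_on_neg_root_weight) (use K(2,3) in blast)+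
  define U where "U = (\<lambda>l. neg_root_space h0 (the_inv_into K neg_root_weight l))"
  have U: "U (neg_root_weight b) = neg_root_space h0 b" if "b \<in> K" for b
    using the_inv_into_f_f[OF inj that] by (simp add: U_def)
  have props: "subspace (U l) \<and> U l \<subseteq> rootspace l \<and> U l \<inter> h0 \<subseteq> {0}"
    if l: "l \<in> neg_root_weight ` K" for l
  proof -
    obtain b where b: "b \<in> K" "l = neg_root_weight b"
      using l by blast
    then show ?thesis
      using U[OF b(1)] neg_root_space_props[OF subalg inv] K(2)[OF b(1)] by simp
  qed
  have h0: "subspace h0" "h0 \<subseteq> su"
    using subalg unfolding is_subalg_def by blast+
  have h0_aH: "lbr (aH t) x \<in> h0" if "x \<in> h0" for t x
    using inv aH_in_bH that by (rule bH_invariantD)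
  have "has_iso_dim h0 s (\<Sum>l\<in>neg_root_weight ` K. dim (U l))"
    using h0 h0_aH form _ _ _ _ iso
  proof (rule has_iso_dim_weight_family)
    show "finite (neg_root_weight ` K)"
      using K(1) by simp
  qed (use props in blast)+
  moreover have "(\<Sum>l\<in>neg_root_weight ` K. dim (U l)) = (\<Sum>b\<in>K. neg_root_dim b)"
    using U neg_root_space_props[OF subalg inv] K(2) by (simp add: sum.reindex[OF inj])
  ultimately show ?thesis
    by simp
qed

section \<open>Five isotropic configurations\<close>

definition short_long_sum_roots :: "'p \<Rightarrow> 'p neg_root set" where
  "short_long_sum_roots i = insert (NegShort i) (insert (NegLong i) (NegSum i ` (- {i})))"

definition short_long_diff_roots :: "'p \<Rightarrow> 'p neg_root set" where
  "short_long_diff_roots i = insert (NegShort i) (insert (NegLong i) (NegDiff i ` (- {i})))"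

definition short_sum_diff_roots :: "'p \<Rightarrow> 'p neg_root set" where
  "short_sum_diff_roots i = insert (NegShort i) (NegSum i ` (- {i}) \<union> NegDiff i ` (- {i}))"

definition long_sum_roots :: "'p \<Rightarrow> 'p neg_root set" where
  "long_sum_roots i = insert (NegLong i) (NegSum i ` (- {i}))"

definition two_short_roots :: "'p \<Rightarrow> 'p \<Rightarrow> 'p neg_root set" where
  "two_short_roots i j =
     {NegShort i, NegShort j, NegLong i} \<union> NegSum i ` (- {i, j}) \<union> NegSum j ` (- {i, j})"

lemma isotropic_neg_root_weights_iff:
  "isotropic_weights mu (neg_root_weight ` K) \<longleftrightarrow>
     (\<forall>b\<in>K. \<forall>b'\<in>K. \<exists>m. neg_root_weight b m + neg_root_weight b' m \<noteq> - 2 * mu m)"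
  unfolding isotropic_weights_def fun_eq_iff by blast

lemma not_isotropic_short_long_sum_roots:
  assumes "\<not> isotropic_weights mu (neg_root_weight ` short_long_sum_roots i)"
  shows "1 \<le> mu i \<and> (\<forall>k. k \<noteq> i \<longrightarrow> 0 \<le> mu k \<and> mu k \<le> 1 \<and> (mu k = 1 \<longrightarrow> mu = (\<lambda>m. alpha i m + alpha k m)))"
proof -
  obtain b b' where bb: "b \<in> short_long_sum_roots i" "b' \<in> short_long_sum_roots i"
    and e: "\<And>m. neg_root_weight b m + neg_root_weight b' m = - 2 * mu m"
    using assms unfolding isotropic_neg_root_weights_iff by blast
  have at_i: "neg_root_weight c i \<le> -1" if "c \<in> short_long_sum_roots i" for c
    using that by (auto simp: short_long_sum_roots_def neg_root_weight_apply split: if_splits)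
  have at_k: "-1 \<le> neg_root_weight c k \<and> neg_root_weight c k \<le> 0 \<and>
      (neg_root_weight c k = -1 \<longrightarrow> c = NegSum i k)" if "c \<in> short_long_sum_roots i" "k \<noteq> i" for c k
    using that by (auto simp: short_long_sum_roots_def neg_root_weight_apply split: if_splits)
  have "1 \<le> mu i"
    using at_i[OF bb(1)] at_i[OF bb(2)] e[of i] by linarith
  moreover have "0 \<le> mu k \<and> mu k \<le> 1 \<and> (mu k = 1 \<longrightarrow> mu = (\<lambda>m. alpha i m + alpha k m))"
    if k: "k \<noteq> i" for k
  proof (intro conjI impI)
    show "0 \<le> mu k" "mu k \<le> 1"
      using at_k[OF bb(1) k] at_k[OF bb(2) k] e[of k] by linarith+
  next
    assume "mu k = 1"
    then have "neg_root_weight b k = -1" "neg_root_weight b' k = -1"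
      using at_k[OF bb(1) k] at_k[OF bb(2) k] e[of k] by linarith+
    then have "b = NegSum i k" "b' = NegSum i k"
      using at_k[OF bb(1) k] at_k[OF bb(2) k] by blast+
    show "mu = (\<lambda>m. alpha i m + alpha k m)"
    proof
      fix m
      have "- alpha i m - alpha k m + (- alpha i m - alpha k m) = - 2 * mu m"
        using e[of m] \<open>b = NegSum i k\<close> \<open>b' = NegSum i k\<close> by simp
      then show "mu m = alpha i m + alpha k m"
        by linarith
    qed
  qed
  ultimately show ?thesis
    by blast
qed

lemma isotropic_short_long_diff_roots:
  assumes "k \<noteq> i" "0 < mu k"
  shows "isotropic_weights mu (neg_root_weight ` short_long_diff_roots i)"
  unfolding isotropic_neg_root_weights_iff
proof (intro ballI)
  fix b b' assume "b \<in> short_long_diff_roots i" "b' \<in> short_long_diff_roots i"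
  then have "0 \<le> neg_root_weight b k" "0 \<le> neg_root_weight b' k"
    using assms(1) by (auto simp: short_long_diff_roots_def neg_root_weight_apply split: if_splits)
  then show "\<exists>m. neg_root_weight b m + neg_root_weight b' m \<noteq> - 2 * mu m"
    using assms(2) by (intro exI[of _ k]) linarith
qed

lemma isotropic_short_sum_diff_roots:
  assumes "mu i \<noteq> 1"
  shows "isotropic_weights mu (neg_root_weight ` short_sum_diff_roots i)"
  unfolding isotropic_neg_root_weights_iff
proof (intro ballI)
  fix b b' assume "b \<in> short_sum_diff_roots i" "b' \<in> short_sum_diff_roots i"
  then have "neg_root_weight b i = -1" "neg_root_weight b' i = -1"
    by (auto simp: short_sum_diff_roots_def neg_root_weight_apply split: if_splits)
  then show "\<exists>m. neg_root_weight b m + neg_root_weight b' m \<noteq> - 2 * mu m"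
    using assms by (intro exI[of _ i]) simp
qed

lemma isotropic_long_sum_roots:
  assumes mu: "mu = alpha i"
  shows "isotropic_weights mu (neg_root_weight ` long_sum_roots i)"
  unfolding isotropic_neg_root_weights_iff
proof (intro ballI)
  fix b b' assume b: "b \<in> long_sum_roots i" "b' \<in> long_sum_roots i"
  show "\<exists>m. neg_root_weight b m + neg_root_weight b' m \<noteq> - 2 * mu m"
  proof (rule ccontr)
    assume "\<not> ?thesis"
    then have e: "neg_root_weight b m + neg_root_weight b' m = - 2 * mu m" for m
      by blast
    have mu_i: "mu i = 1" and mu_other: "\<And>k. k \<noteq> i \<Longrightarrow> mu k = 0"
      by (simp_all add: mu alpha_def)
    \<comment> \<open>the \<open>\<alpha>\<^sub>i\<close>-coordinate forces \<open>b = -\<alpha>\<^sub>i-\<alpha>\<^sub>k\<close>, whose \<open>\<alpha>\<^sub>k\<close>-coordinate cannot be cancelled\<close>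
    have "neg_root_weight b i = -1"
      using b e[of i] mu_i by (auto simp: long_sum_roots_def neg_root_weight_apply split: if_splits)
    then obtain k where k: "k \<noteq> i" "b = NegSum i k"
      using b(1) by (auto simp: long_sum_roots_def neg_root_weight_apply)
    have "neg_root_weight b' k \<le> 0"
      using b(2) by (auto simp: long_sum_roots_def neg_root_weight_apply split: if_splits)
    moreover have "neg_root_weight b k = -1"
      using k by (simp add: alpha_def)
    ultimately show False
      using e[of k] mu_other[OF k(1)] by linarith
  qed
qed

lemma isotropic_two_short_roots:
  assumes ij: "i \<noteq> j" and mu: "mu = (\<lambda>m. alpha i m + alpha j m)"
  shows "isotropic_weights mu (neg_root_weight ` two_short_roots i j)"
  unfolding isotropic_neg_root_weights_iff
proof (intro ballI)
  fix b b' assume b: "b \<in> two_short_roots i j" "b' \<in> two_short_roots i j"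
  show "\<exists>m. neg_root_weight b m + neg_root_weight b' m \<noteq> - 2 * mu m"
  proof (rule ccontr)
    assume "\<not> ?thesis"
    then have e: "neg_root_weight b m + neg_root_weight b' m = - 2 * mu m" for m
      by blast
    have at_j: "-1 \<le> neg_root_weight c j \<and> (neg_root_weight c j = -1 \<longrightarrow> neg_root_weight c i = 0)"
      if "c \<in> two_short_roots i j" for c
      using that ij by (auto simp: two_short_roots_def neg_root_weight_apply split: if_splits)
    have "mu i = 1" "mu j = 1"
      using ij by (simp_all add: mu alpha_def)
    \<comment> \<open>the \<open>\<alpha>\<^sub>j\<close>-coordinates force both \<open>\<alpha>\<^sub>i\<close>-coordinates to vanish\<close>
    then show False
      using at_j[OF b(1)] at_j[OF b(2)] e[of i] e[of j] by linarith
  qed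
qed

lemma sum_neg_root_dim_NegSum: "(\<Sum>b\<in>NegSum i ` S. neg_root_dim b) = 2 * card S"
  by (simp add: sum.reindex inj_on_def)

lemma sum_neg_root_dim_NegDiff: "(\<Sum>b\<in>NegDiff i ` S. neg_root_dim b) = 2 * card S"
  by (simp add: sum.reindex inj_on_def)

lemma card_Compl_singleton: "card (- {i :: 'a :: finite}) = CARD('a) - 1"
  by (simp add: Compl_eq_Diff_UNIV card_Diff_singleton)

lemma card_Compl_doubleton: "i \<noteq> j \<Longrightarrow> card (- {i, j :: 'a :: finite}) = CARD('a) - 2"
  by (simp add: Compl_eq_Diff_UNIV card_Diff_subset)

lemma card_ge_1: "1 \<le> CARD('a::finite)"
  by (simp add: Suc_le_eq)

lemma has_iso_dim_short_long_sum_roots: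
  fixes h0 :: "('p::{finite,linorder}, 'r::finite) mat set"
  assumes "is_subalg h0" "bH_invariant h0" "weighted_quot_form h0 s mu"
    and nz: "\<not> rootspace (\<lambda>m. - alpha i m) \<subseteq> h0"
    and iso: "isotropic_weights mu (neg_root_weight ` short_long_sum_roots i)"
  shows "has_iso_dim h0 s (2 * CARD('p))"
proof -
  have "has_iso_dim h0 s (\<Sum>b\<in>short_long_sum_roots i. neg_root_dim b)"
    using nz by (intro has_iso_dim_neg_roots[OF assms(1-3) _ _ _ iso]) (auto simp: short_long_sum_roots_def)
  moreover have "(\<Sum>b\<in>short_long_sum_roots i. neg_root_dim b) = 2 + 2 * (CARD('p) - 1)"
    by (simp add: short_long_sum_roots_def image_iff sum_neg_root_dim_NegSum card_Compl_singleton)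
  moreover have "2 + 2 * (CARD('p) - 1) = 2 * CARD('p)"
    using card_ge_1[where 'a='p] by arith
  ultimately show ?thesis
    by simp
qed

lemma has_iso_dim_short_long_diff_roots:
  fixes h0 :: "('p::{finite,linorder}, 'r::finite) mat set"
  assumes "is_subalg h0" "bH_invariant h0" "weighted_quot_form h0 s mu"
    and nz: "\<not> rootspace (\<lambda>m. - alpha i m) \<subseteq> h0"
    and others: "\<forall>j. j \<noteq> i \<longrightarrow> rootspace (\<lambda>m. - alpha j m) \<subseteq> h0"
    and iso: "isotropic_weights mu (neg_root_weight ` short_long_diff_roots i)"
  shows "has_iso_dim h0 s (2 * CARD('p))"
proof -
  have "has_iso_dim h0 s (\<Sum>b\<in>short_long_diff_roots i. neg_root_dim b)"
    using nz others
    by (intro has_iso_dim_neg_roots[OF assms(1-3) _ _ _ iso]) (auto simp: short_long_diff_roots_def)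
  moreover have "(\<Sum>b\<in>short_long_diff_roots i. neg_root_dim b) = 2 + 2 * (CARD('p) - 1)"
    by (simp add: short_long_diff_roots_def image_iff sum_neg_root_dim_NegDiff card_Compl_singleton)
  moreover have "2 + 2 * (CARD('p) - 1) = 2 * CARD('p)"
    using card_ge_1[where 'a='p] by arith
  ultimately show ?thesis
    by simp
qed

lemma has_iso_dim_short_sum_diff_roots:
  fixes h0 :: "('p::{finite,linorder}, 'r::finite) mat set"
  assumes "is_subalg h0" "bH_invariant h0" "weighted_quot_form h0 s mu"
    and nz: "\<not> rootspace (\<lambda>m. - alpha i m) \<subseteq> h0"
    and others: "\<forall>j. j \<noteq> i \<longrightarrow> rootspace (\<lambda>m. - alpha j m) \<subseteq> h0"
    and iso: "isotropic_weights mu (neg_root_weight ` short_sum_diff_roots i)"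
  shows "has_iso_dim h0 s (4 * CARD('p) - 3)"
proof -
  have "has_iso_dim h0 s (\<Sum>b\<in>short_sum_diff_roots i. neg_root_dim b)"
    using nz others
    by (intro has_iso_dim_neg_roots[OF assms(1-3) _ _ _ iso]) (auto simp: short_sum_diff_roots_def)
  moreover have "NegSum i ` (- {i}) \<inter> NegDiff i ` (- {i}) = {}"
    by auto
  then have "(\<Sum>b\<in>short_sum_diff_roots i. neg_root_dim b) = 1 + 2 * (CARD('p) - 1) + 2 * (CARD('p) - 1)"
    by (simp add: short_sum_diff_roots_def image_iff sum.union_disjoint sum_neg_root_dim_NegSum
        sum_neg_root_dim_NegDiff card_Compl_singleton)
  moreover have "1 + 2 * (CARD('p) - 1) + 2 * (CARD('p) - 1) = 4 * CARD('p) - 3"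
    using card_ge_1[where 'a='p] by arith
  ultimately show ?thesis
    by simp
qed

lemma has_iso_dim_long_sum_roots:
  fixes h0 :: "('p::{finite,linorder}, 'r::finite) mat set"
  assumes "is_subalg h0" "bH_invariant h0" "weighted_quot_form h0 s mu"
    and nz: "\<not> rootspace (\<lambda>m. - alpha i m) \<subseteq> h0"
    and iso: "isotropic_weights mu (neg_root_weight ` long_sum_roots i)"
  shows "has_iso_dim h0 s (2 * CARD('p) - 1)"
proof -
  have "has_iso_dim h0 s (\<Sum>b\<in>long_sum_roots i. neg_root_dim b)"
    using nz by (intro has_iso_dim_neg_roots[OF assms(1-3) _ _ _ iso]) (auto simp: long_sum_roots_def)
  moreover have "(\<Sum>b\<in>long_sum_roots i. neg_root_dim b) = 1 + 2 * (CARD('p) - 1)"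
    by (simp add: long_sum_roots_def image_iff sum_neg_root_dim_NegSum card_Compl_singleton)
  moreover have "1 + 2 * (CARD('p) - 1) = 2 * CARD('p) - 1"
    using card_ge_1[where 'a='p] by arith
  ultimately show ?thesis
    by simp
qed

lemma has_iso_dim_two_short_roots:
  fixes h0 :: "('p::{finite,linorder}, 'r::finite) mat set"
  assumes "is_subalg h0" "bH_invariant h0" "weighted_quot_form h0 s mu" and ij: "i \<noteq> j"
    and nz: "\<not> rootspace (\<lambda>m. - alpha i m) \<subseteq> h0" "\<not> rootspace (\<lambda>m. - alpha j m) \<subseteq> h0"
    and iso: "isotropic_weights mu (neg_root_weight ` two_short_roots i j)"
  shows "has_iso_dim h0 s (4 * CARD('p) - 5)"
proof -
  have "has_iso_dim h0 s (\<Sum>b\<in>two_short_roots i j. neg_root_dim b)"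
    using nz by (intro has_iso_dim_neg_roots[OF assms(1-3) _ _ _ iso]) (auto simp: two_short_roots_def)
  moreover have "NegSum i ` (- {i, j}) \<inter> NegSum j ` (- {i, j}) = {}"
    using ij by auto
  then have "(\<Sum>b\<in>two_short_roots i j. neg_root_dim b) = 3 + 2 * (CARD('p) - 2) + 2 * (CARD('p) - 2)"
    using ij by (simp add: two_short_roots_def image_iff sum.union_disjoint sum_neg_root_dim_NegSum
        card_Compl_doubleton)
  moreover have "2 \<le> CARD('p)"
    using ij card_mono[of UNIV "{i, j}"] by simp
  ultimately show ?thesis
    by (simp add: algebra_simps)
qed

lemma alpha_add_alpha_eq_one:
  assumes "CARD('p::finite) = 2" "i \<noteq> j"
  shows "(\<lambda>m. alpha i m + alpha j m) = (\<lambda>m::'p. 1)"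
proof
  fix m :: 'p
  have "{i, j} = UNIV"
    using assms by (intro card_subset_eq) auto
  then have "m = i \<or> m = j"
    by blast
  then show "alpha i m + alpha j m = 1"
    using assms(2) by (elim disjE) (simp_all add: alpha_def)
qed

lemma iso_dim_double_card_or_sum_of_alphas:
  fixes h0 :: "('p::{finite,linorder}, 'r::finite) mat set"
  assumes hyps: "is_subalg h0" "bH_invariant h0" "weighted_quot_form h0 s mu" and ij: "j \<noteq> i"
    and nz: "\<not> rootspace (\<lambda>m. - alpha i m) \<subseteq> h0" "\<not> rootspace (\<lambda>m. - alpha j m) \<subseteq> h0"
  shows "has_iso_dim h0 s (2 * CARD('p)) \<or> mu = (\<lambda>m. alpha i m + alpha j m)"
proof (cases "isotropic_weights mu (neg_root_weight ` short_long_sum_roots i)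
    \<or> isotropic_weights mu (neg_root_weight ` short_long_sum_roots j)")
  case True
  then show ?thesis
    using has_iso_dim_short_long_sum_roots[OF hyps nz(1)] has_iso_dim_short_long_sum_roots[OF hyps nz(2)]
    by blast
next
  case False
  then have "1 \<le> mu j" "mu j \<le> 1" "mu j = 1 \<longrightarrow> mu = (\<lambda>m. alpha i m + alpha j m)"
    using not_isotropic_short_long_sum_roots[of mu i] not_isotropic_short_long_sum_roots[of mu j] ij
    by blast+
  then show ?thesis
    by simp
qed

lemma iso_dim_two_nonvanishing_short_roots:
  fixes h0 :: "('p::{finite,linorder}, 'r::finite) mat set"
  assumes hyps: "is_subalg h0" "bH_invariant h0" "weighted_quot_form h0 s mu"
    and p: "CARD('p) > 1" and ij: "j \<noteq> i"
    and nz: "\<not> rootspace (\<lambda>m. - alpha i m) \<subseteq> h0" "\<not> rootspace (\<lambda>m. - alpha j m) \<subseteq> h0"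
  shows "(\<exists>d. d > 2 * CARD('p) - 1 \<and> has_iso_dim h0 s d)
    \<or> (CARD('p) = 2 \<and> mu = (\<lambda>m. 1) \<and> has_iso_dim h0 s 3)"
  using iso_dim_double_card_or_sum_of_alphas[OF hyps ij nz]
proof
  assume "has_iso_dim h0 s (2 * CARD('p))"
  then show ?thesis
    using p by (intro disjI1 exI[of _ "2 * CARD('p)"]) simp
next
  assume mu: "mu = (\<lambda>m. alpha i m + alpha j m)"
  have iso: "has_iso_dim h0 s (4 * CARD('p) - 5)"
    using ij nz mu by (intro has_iso_dim_two_short_roots[OF hyps] isotropic_two_short_roots) auto
  show ?thesis
  proof (cases "CARD('p) = 2")
    case True
    then show ?thesis
      using iso mu alpha_add_alpha_eq_one[OF True ij[symmetric]] by simp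
  next
    case False
    then have "4 * CARD('p) - 5 > 2 * CARD('p) - 1"
      using p by simp
    then show ?thesis
      using iso by blast
  qed
qed

lemma iso_dim_ge_double_card:
  fixes h0 :: "('p::{finite,linorder}, 'r::finite) mat set"
  assumes hyps: "is_subalg h0" "bH_invariant h0" "weighted_quot_form h0 s mu"
    and p: "CARD('p) > 1" and nz: "\<not> rootspace (\<lambda>m. - alpha i m) \<subseteq> h0"
    and others: "\<forall>j. j \<noteq> i \<longrightarrow> rootspace (\<lambda>m. - alpha j m) \<subseteq> h0"
    and ne: "mu \<noteq> alpha i"
  shows "\<exists>d \<ge> 2 * CARD('p). has_iso_dim h0 s d"
proof (cases "isotropic_weights mu (neg_root_weight ` short_long_sum_roots i)")
  case True
  then show ?thesis
    using has_iso_dim_short_long_sum_roots[OF hyps nz] by blast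
next
  case False
  have bounds: "0 \<le> mu k" if "k \<noteq> i" for k
    using not_isotropic_short_long_sum_roots[OF False] that by blast
  show ?thesis
  proof (cases "\<exists>k. k \<noteq> i \<and> 0 < mu k")
    case True
    then obtain k where "k \<noteq> i" "0 < mu k"
      by blast
    then show ?thesis
      using has_iso_dim_short_long_diff_roots[OF hyps nz others isotropic_short_long_diff_roots] by blast
  next
    case False
    have zero: "mu k = 0" if "k \<noteq> i" for k
    proof -
      have "\<not> 0 < mu k"
        using False that by blast
      then show ?thesis
        using bounds[OF that] by linarith
    qed
    have "mu i \<noteq> 1"
    proof
      assume "mu i = 1"
      then have "mu m = alpha i m" for m
        using zero by (cases "m = i") (simp_all add: alpha_def)
      with ne show False
        by blast
    qed
    then have "has_iso_dim h0 s (4 * CARD('p) - 3)"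
      by (intro has_iso_dim_short_sum_diff_roots[OF hyps nz others] isotropic_short_sum_diff_roots)
    moreover have "4 * CARD('p) - 3 \<ge> 2 * CARD('p)"
      using p by simp
    ultimately show ?thesis by blast
  qed
qed

lemma iso_dim_one_nonvanishing_short_root:
  fixes h0 :: "('p::{finite,linorder}, 'r::finite) mat set"
  assumes hyps: "is_subalg h0" "bH_invariant h0" "weighted_quot_form h0 s mu"
    and p: "CARD('p) > 1" and nz: "\<not> rootspace (\<lambda>m. - alpha i m) \<subseteq> h0"
    and others: "\<forall>j. j \<noteq> i \<longrightarrow> rootspace (\<lambda>m. - alpha j m) \<subseteq> h0"
  shows "(\<exists>d. d \<ge> 2 * CARD('p) - 1 \<and> has_iso_dim h0 s d)
    \<and> (has_iso_dim h0 s (2 * CARD('p) - 1) \<and> (\<forall>d. has_iso_dim h0 s d \<longrightarrow> d \<le> 2 * CARD('p) - 1)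
        \<longrightarrow> mu = alpha i)"
proof (intro conjI impI)
  show "\<exists>d. d \<ge> 2 * CARD('p) - 1 \<and> has_iso_dim h0 s d"
  proof (cases "mu = alpha i")
    case True
    then show ?thesis
      using has_iso_dim_long_sum_roots[OF hyps nz isotropic_long_sum_roots] by blast
  next
    case False
    then obtain d where "d \<ge> 2 * CARD('p)" "has_iso_dim h0 s d"
      using iso_dim_ge_double_card[OF hyps p nz others] by blast
    then show ?thesis
      by (intro exI[of _ d]) simp
  qed
next
  assume max: "has_iso_dim h0 s (2 * CARD('p) - 1) \<and> (\<forall>d. has_iso_dim h0 s d \<longrightarrow> d \<le> 2 * CARD('p) - 1)"
  show "mu = alpha i"
  proof (rule ccontr)
    assume "mu \<noteq> alpha i"
    then obtain d where "d \<ge> 2 * CARD('p)" "has_iso_dim h0 s d"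
      using iso_dim_ge_double_card[OF hyps p nz others] by blast
    then show False
      using max p by fastforce
  qed
qed

theorem mainTheorem7:
  fixes h0 :: "('p::{finite,linorder}, 'r::finite) mat set"
    and s :: "('p, 'r) mat \<Rightarrow> ('p, 'r) mat \<Rightarrow> real"
    and mu :: "'p \<Rightarrow> real"
    and i :: 'p
  assumes subalg: "is_subalg h0"
    and inv: "bH_invariant h0"
    and form: "quot_sym_form h0 s"
    and mu_cond: "\<forall>t. \<forall>x\<in>su. \<forall>y\<in>su.
        s (lbr (aH t) x) y + s x (lbr (aH t) y) = - 2 * pair mu t * s x y"
    and nz_i: "\<not> rootspace (\<lambda>m. - alpha i m) \<subseteq> h0"
  shows
    "(CARD('p) > 1 \<and> (\<exists>j. j \<noteq> i \<and> \<not> rootspace (\<lambda>m. - alpha j m) \<subseteq> h0) \<longrightarrow>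
        (\<exists>d. d > 2 * CARD('p) - 1 \<and> has_iso_dim h0 s d)
        \<or> (CARD('p) = 2 \<and> mu = (\<lambda>m. 1) \<and> has_iso_dim h0 s 3))
   \<and> (CARD('p) > 1 \<and> (\<forall>j. j \<noteq> i \<longrightarrow> rootspace (\<lambda>m. - alpha j m) \<subseteq> h0) \<longrightarrow>
        (\<exists>d. d \<ge> 2 * CARD('p) - 1 \<and> has_iso_dim h0 s d)
        \<and> ((has_iso_dim h0 s (2 * CARD('p) - 1) \<and> (\<forall>d. has_iso_dim h0 s d \<longrightarrow> d \<le> 2 * CARD('p) - 1))
            \<longrightarrow> (\<exists>a'. (\<forall>m. 2 * mu m = 2 * alpha i m + a' m) \<and>
                   (a' = (\<lambda>m. 0) \<or> (\<exists>j. j \<noteq> i \<and> a' = alpha j)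
                    \<or> (\<exists>j k. j \<noteq> i \<and> k \<noteq> i \<and> a' = (\<lambda>m. alpha j m + alpha k m))))))"
proof -
  have sform: "weighted_quot_form h0 s mu"
    using form mu_cond unfolding weighted_quot_form_def by blast
  have "\<exists>a'. (\<forall>m. 2 * mu m = 2 * alpha i m + a' m) \<and>
      (a' = (\<lambda>m. 0) \<or> (\<exists>j. j \<noteq> i \<and> a' = alpha j)
       \<or> (\<exists>j k. j \<noteq> i \<and> k \<noteq> i \<and> a' = (\<lambda>m. alpha j m + alpha k m)))"
    if "mu = alpha i"
    using that by (intro exI[of _ "\<lambda>m. 0"]) simp
  then show ?thesis
    using iso_dim_two_nonvanishing_short_roots[OF subalg inv sform _ _ nz_i]
      iso_dim_one_nonvanishing_short_root[OF subalg inv sform _ nz_i]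
    by blast
qed

end
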